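(* Let $R$ be a discrete $\Gamma$-ring and $r\in R[2]$ a formal difference law in $R$. Then there is a unique multiplicative map (morphism of $\Gamma$-rings) $\phi:H\mathbb{Z}\to R$ with $\phi(\pm1_n)=r^n\in R[2^n]$ for all $n\ge0$; explicitly $\phi(n_1,\dots,n_k)=f(r^n)$ for any $n$ and any pointed map $f:[2^n]\to[k]$ with $f(\pm1_n)=(n_1,\dots,n_k)$.
   Context: Let $[n]=\{0,1,\dots,n\}$, pointed at $0$. A $\Gamma$-space is a functor $F$ from the finite pointed sets $[n]$ (with pointed maps) to pointed simplicial sets with $F[0]$ a point; for a pointed map $f$ we write $f$ also for $F(f)$; $\Sigma_n$ acts on $F[n]$ via permutations of $\{1,\dots,n\}$. We identify $[n]\wedge[m]$ with $[nm]$ via $i\wedge j\mapsto (j-1)n+i$. A $\Gamma$-ring is a $\Gamma$-space $R$ with unit $1\in R[1]$ (image of the unit map $\eta$) and associative unital multiplication given by natural maps $R(K)\wedge R(L)\to R(K\wedge L)$, $p\wedge q\mapsto pq$; it is discrete if all $R(K)$ are sets; $0\in R[1]$ denotes the basepoint. For $x\in R[2]$, $x^k\in R[2^k]$ is the $k$-fold product, $x^0=1$. A multiplicative map of $\Gamma$-rings is a natural transformation preserving units and products. Maps: $p^n_i:[n]\to[n-1]$, $p^n_i(j)=j$ ($j<i$), $p^n_i(i)=0$, $p^n_i(j)=j-1$ ($j>i$); for $1\le i<j\le n$ and $1\le k\le n-1$, $s^n_{i,j,k}:[n]\to[n-1]$ sends $0\mapsto0$, $i,j\mapsto k$, and the remaining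 elements order-preservingly and bijectively onto $\{1,\dots,n-1\}\setminus\{k\}$; $d^n_j:[n-1]\to[n]$ is the order-preserving injection missing $j$. $H\mathbb{Z}$ is the $\Gamma$-ring with $H\mathbb{Z}(K)$ the reduced free abelian group on $K$ (so $H\mathbb Z[k]=\mathbb Z^k$), pointed maps acting by summing coefficients along fibres, unit the inclusion of generators, multiplication $(\sum a_k k)(\sum b_l l)=\sum a_kb_l (k\wedge l)$. $\pm1_n=(1,-1)^n\in H\mathbb{Z}[2^n]$ (the $n$-th power of $(1,-1)\in H\mathbb Z[2]$). For $k\ge1$, split $\{1,\dots,2^k\}=A_+\sqcup A_-$ where $i\in A_+$ iff the binary expansion of $i-1$ has an even number of digits $1$. The special action of $\Sigma_{2^{k-1}}\times\Sigma_{2^{k-1}}$ on $F[2^k]$ is the action of the group of permutations of $\{1,\dots,2^k\}$ preserving $A_+$ and $A_-$. Let $\sigma$ be the nontrivial element of $\Sigma_2$. A formal difference law in $R$ is $r\in R[2]$ such that: (1) $p^2_2(r)=1$ and $s^2_{1,2,1}(r)=0$; (2) $p^2_1(r)\,r=r\,p^2_1(r)=\sigma(r)$ in $R[2]$; (3) for every $k\ge1$, $r^k$ is fixed under the special action; (4) for every $k\ge1$, all $1\le i<j\le 2^k$ with one of $i,j$ in $A_+$ and the other in $A_-$, and all $1\le l\le 2^k-1$: $s^{2^k}_{i,j,l}(r^k)=d^{2^k-1}_l\,p^{2^k-1}_i\,p^{2^k}_j(r^k)$. *)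

theory Defs
  imports Main
begin

section \<open>Discrete Gamma-rings, modelled on the skeleton [n] = {0,...,n}\<close>

text \<open>A discrete Gamma-ring is given by: carriers R[n] (as subsets of one type),
 basepoints, the action of pointed maps f:[n]->[m] (functions nat=>nat, only their
 values on {0..n} matter), the multiplication R[n] x R[m] -> R[nm], and the unit in R[1].\<close>

record 'a gring =
  carr :: "nat \<Rightarrow> 'a set"
  bpt  :: "nat \<Rightarrow> 'a"
  act  :: "nat \<Rightarrow> nat \<Rightarrow> (nat \<Rightarrow> nat) \<Rightarrow> 'a \<Rightarrow> 'a"
  mul  :: "nat \<Rightarrow> nat \<Rightarrow> 'a \<Rightarrow> 'a \<Rightarrow> 'a"
  one  :: "'a"

definition pmap :: "nat \<Rightarrow> nat \<Rightarrow> (nat \<Rightarrow> nat) \<Rightarrow> bool" where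
  "pmap n m f \<longleftrightarrow> f 0 = 0 \<and> (\<forall>i\<le>n. f i \<le> m)"

text \<open>Smash product of pointed maps, using [n]^[m] = [nm], i^j |-> (j-1)n+i.\<close>
definition smash_map :: "nat \<Rightarrow> nat \<Rightarrow> (nat \<Rightarrow> nat) \<Rightarrow> (nat \<Rightarrow> nat) \<Rightarrow> nat \<Rightarrow> nat" where
  "smash_map n m f g x =
     (if x = 0 then 0 else
      (let i = (x - 1) mod n + 1; j = (x - 1) div n + 1 in
       if f i = 0 \<or> g j = 0 then 0 else (g j - 1) * m + f i))"

definition discrete_gamma_ring :: "'a gring \<Rightarrow> bool" where
  "discrete_gamma_ring R \<longleftrightarrow>
     carr R 0 = {bpt R 0} \<and>
     (\<forall>n. bpt R n \<in> carr R n) \<and>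
     (\<forall>n m f x. pmap n m f \<longrightarrow> x \<in> carr R n \<longrightarrow> act R n m f x \<in> carr R m) \<and>
     (\<forall>n m f. pmap n m f \<longrightarrow> act R n m f (bpt R n) = bpt R m) \<and>
     (\<forall>n m f g x. (\<forall>i\<le>n. f i = g i) \<longrightarrow> x \<in> carr R n \<longrightarrow> act R n m f x = act R n m g x) \<and>
     (\<forall>n x. x \<in> carr R n \<longrightarrow> act R n n id x = x) \<and>
     (\<forall>n m l f g x. pmap n m f \<longrightarrow> pmap m l g \<longrightarrow> x \<in> carr R n \<longrightarrow>
        act R m l g (act R n m f x) = act R n l (g \<circ> f) x) \<and>
     one R \<in> carr R 1 \<and>
     (\<forall>n m x y. x \<in> carr R n \<longrightarrow> y \<in> carr R m \<longrightarrow> mul R n m x y \<in> carr R (n * m)) \<and>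
     (\<forall>n m y. y \<in> carr R m \<longrightarrow> mul R n m (bpt R n) y = bpt R (n * m)) \<and>
     (\<forall>n m x. x \<in> carr R n \<longrightarrow> mul R n m x (bpt R m) = bpt R (n * m)) \<and>
     (\<forall>n n' m m' f g x y. pmap n m f \<longrightarrow> pmap n' m' g \<longrightarrow> x \<in> carr R n \<longrightarrow> y \<in> carr R n' \<longrightarrow>
        mul R m m' (act R n m f x) (act R n' m' g y) =
        act R (n * n') (m * m') (smash_map n m f g) (mul R n n' x y)) \<and>
     (\<forall>n m l x y z. x \<in> carr R n \<longrightarrow> y \<in> carr R m \<longrightarrow> z \<in> carr R l \<longrightarrow>
        mul R (n * m) l (mul R n m x y) z = mul R n (m * l) x (mul R m l y z)) \<and>
     (\<forall>n x. x \<in> carr R n \<longrightarrow> mul R 1 n (one R) x = x \<and> mul R n 1 x (one R) = x)"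

primrec gpow :: "'a gring \<Rightarrow> 'a \<Rightarrow> nat \<Rightarrow> 'a" where
  "gpow R x 0 = one R"
| "gpow R x (Suc k) = mul R (2 ^ k) 2 (gpow R x k) x"

definition multiplicative_map :: "'a gring \<Rightarrow> 'b gring \<Rightarrow> (nat \<Rightarrow> 'a \<Rightarrow> 'b) \<Rightarrow> bool" where
  "multiplicative_map R S phi \<longleftrightarrow>
     (\<forall>n x. x \<in> carr R n \<longrightarrow> phi n x \<in> carr S n) \<and>
     (\<forall>n. phi n (bpt R n) = bpt S n) \<and>
     (\<forall>n m f x. pmap n m f \<longrightarrow> x \<in> carr R n \<longrightarrow> phi m (act R n m f x) = act S n m f (phi n x)) \<and>
     phi 1 (one R) = one S \<and>
     (\<forall>n m x y. x \<in> carr R n \<longrightarrow> y \<in> carr R m \<longrightarrow>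
        phi (n * m) (mul R n m x y) = mul S n m (phi n x) (phi m y))"

text \<open>HZ[n] = Z^n, as integer functions supported on {1..n}.\<close>
definition HZ :: "(nat \<Rightarrow> int) gring" where
  "HZ = \<lparr> carr = (\<lambda>n. {v. \<forall>i. (i = 0 \<or> n < i) \<longrightarrow> v i = 0}),
          bpt = (\<lambda>n i. 0),
          act = (\<lambda>n m f v j. if 1 \<le> j \<and> j \<le> m then (\<Sum>i\<in>{i. 1 \<le> i \<and> i \<le> n \<and> f i = j}. v i) else 0),
          mul = (\<lambda>n m v w k. if 1 \<le> k \<and> k \<le> n * m
                    then v ((k - 1) mod n + 1) * w ((k - 1) div n + 1) else 0),
          one = (\<lambda>i. if i = 1 then 1 else 0) \<rparr>"

definition one_minus_one :: "nat \<Rightarrow> int" where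
  "one_minus_one = (\<lambda>i. if i = 1 then 1 else if i = 2 then -1 else 0)"

definition pm1 :: "nat \<Rightarrow> nat \<Rightarrow> int" where
  "pm1 n = gpow HZ one_minus_one n"

definition pmap_p :: "nat \<Rightarrow> nat \<Rightarrow> nat \<Rightarrow> nat" where
  "pmap_p n i j = (if j < i then j else if j = i then 0 else j - 1)"

definition pmap_s :: "nat \<Rightarrow> nat \<Rightarrow> nat \<Rightarrow> nat \<Rightarrow> nat \<Rightarrow> nat" where
  "pmap_s n i j k m =
     (if m = 0 then 0 else if m = i \<or> m = j then k else
      (let t = m - ((if i < m then 1 else 0) + (if j < m then 1 else 0)) in
       if t < k then t else t + 1))"

definition pmap_d :: "nat \<Rightarrow> nat \<Rightarrow> nat \<Rightarrow> nat" where
  "pmap_d n j m = (if m < j then m else m + 1)"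

definition swap12 :: "nat \<Rightarrow> nat" where
  "swap12 m = (if m = 1 then 2 else if m = 2 then 1 else m)"

fun popcount :: "nat \<Rightarrow> nat" where
  "popcount n = (if n = 0 then 0 else n mod 2 + popcount (n div 2))"

definition Aplus :: "nat \<Rightarrow> nat set" where
  "Aplus k = {i. 1 \<le> i \<and> i \<le> 2 ^ k \<and> even (popcount (i - 1))}"

definition Aminus :: "nat \<Rightarrow> nat set" where
  "Aminus k = {i. 1 \<le> i \<and> i \<le> 2 ^ k \<and> odd (popcount (i - 1))}"

definition special_perm :: "nat \<Rightarrow> (nat \<Rightarrow> nat) \<Rightarrow> bool" where
  "special_perm k \<pi> \<longleftrightarrow> \<pi> 0 = 0 \<and> bij_betw \<pi> {1..2 ^ k} {1..2 ^ k} \<and>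
     \<pi> ` Aplus k = Aplus k \<and> \<pi> ` Aminus k = Aminus k"

definition formal_difference_law :: "'a gring \<Rightarrow> 'a \<Rightarrow> bool" where
  "formal_difference_law R r \<longleftrightarrow>
     r \<in> carr R 2 \<and>
     act R 2 1 (pmap_p 2 2) r = one R \<and>
     act R 2 1 (pmap_s 2 1 2 1) r = bpt R 1 \<and>
     mul R 1 2 (act R 2 1 (pmap_p 2 1) r) r = act R 2 2 swap12 r \<and>
     mul R 2 1 r (act R 2 1 (pmap_p 2 1) r) = act R 2 2 swap12 r \<and>
     (\<forall>k \<pi>. 1 \<le> k \<longrightarrow> special_perm k \<pi> \<longrightarrow>
        act R (2 ^ k) (2 ^ k) \<pi> (gpow R r k) = gpow R r k) \<and>
     (\<forall>k i j l. 1 \<le> k \<longrightarrow> 1 \<le> i \<longrightarrow> i < j \<longrightarrow> j \<le> 2 ^ k \<longrightarrow>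
        ((i \<in> Aplus k \<and> j \<in> Aminus k) \<or> (i \<in> Aminus k \<and> j \<in> Aplus k)) \<longrightarrow>
        1 \<le> l \<longrightarrow> l \<le> 2 ^ k - 1 \<longrightarrow>
        act R (2 ^ k) (2 ^ k - 1) (pmap_s (2 ^ k) i j l) (gpow R r k) =
        act R (2 ^ k - 2) (2 ^ k - 1) (pmap_d (2 ^ k - 1) l)
          (act R (2 ^ k - 1) (2 ^ k - 2) (pmap_p (2 ^ k - 1) i)
            (act R (2 ^ k) (2 ^ k - 1) (pmap_p (2 ^ k) j) (gpow R r k))))"

end

theory Submission
  imports Defs "HOL-Library.Disjoint_Sets"
begin

(* Every vector v of HZ[k] is of the form f((1,-1)^n) for a pointed map
   f : [2^n] -> [k]; one is forced to set phi(v) = f(r^n).  The work is to show that this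
   does not depend on the presentation (n, f):
   - lifting a presentation from level n to level n+1 changes neither side (unit condition);
   - at a fixed level, two positions of opposite sign in the same fibre may be sent to the
     basepoint (condition (4)); this turns every presentation into a sign-coherent one;
   - two sign-coherent presentations of the same vector have fibres with the same numbers of
     positive and negative positions, hence differ by a sign-preserving permutation, which
     fixes r^n (condition (3)).
   Once phi is well defined, naturality, unitality and multiplicativity follow from the
   corresponding properties of HZ and R, and uniqueness holds because the elements (1,-1)^n
   generate HZ under pointed maps. *)

(* Binary digit sums.  The sign of the entry i of (1,-1)^n is (-1)^popcount(i-1), and the
   index arithmetic of smash products adds digit sums of blocks of binary digits. *)
declare popcount.simps[simp del]

lemma popcount_rec: "popcount x = x mod 2 + popcount (x div 2)"
  by (cases "x = 0") (simp, subst popcount.simps, simp)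

lemma popcount_zero [simp]: "popcount 0 = 0"
  by (subst popcount.simps) simp

lemma popcount_one [simp]: "popcount (Suc 0) = 1"
  using popcount_rec[of 1] by simp

lemma popcount_add: "a < 2 ^ n \<Longrightarrow> popcount (a + 2 ^ n * b) = popcount a + popcount b"
proof (induction n arbitrary: a)
  case (Suc n)
  have "popcount (a div 2 + 2 ^ n * b) = popcount (a div 2) + popcount b"
    using Suc by (intro Suc.IH) simp
  moreover have "(a + 2 ^ Suc n * b) div 2 = a div 2 + 2 ^ n * b"
    and "(a + 2 ^ Suc n * b) mod 2 = a mod 2" by (simp_all add: mult.assoc)
  ultimately show ?case using popcount_rec[of "a + 2 ^ Suc n * b"] popcount_rec[of a] by simp
qed simp

definition plus_index :: "nat \<Rightarrow> bool" where
  "plus_index x \<longleftrightarrow> even (popcount (x - 1))"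

lemma Aplus_Aminus: "Aplus n = {x\<in>{1..2 ^ n}. plus_index x}" "Aminus n = {x\<in>{1..2 ^ n}. \<not> plus_index x}"
  unfolding Aplus_def Aminus_def plus_index_def by auto

definition pair_index :: "nat \<Rightarrow> nat \<Rightarrow> nat \<Rightarrow> nat" where
  "pair_index N i j = (j - 1) * N + i"

lemma pair_index_mod_div:
  assumes "1 \<le> i" "i \<le> N" "1 \<le> j"
  shows "(pair_index N i j - 1) mod N + 1 = i" "(pair_index N i j - 1) div N + 1 = j"
proof -
  obtain i' where i: "i = Suc i'" using assms by (cases i) auto
  then have "pair_index N i j - 1 = i' + N * (j - 1)" "i' < N"
    using assms by (simp_all add: pair_index_def)
  then show "(pair_index N i j - 1) mod N + 1 = i" "(pair_index N i j - 1) div N + 1 = j"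
    using assms i by simp_all
qed

lemma pair_index_range:
  assumes "i \<in> {1..N}" "j \<in> {1..M}"
  shows "pair_index N i j \<in> {1..N * M}"
proof -
  have "(j - 1) * N + i \<le> (M - 1) * N + N" using assms by (intro add_mono mult_right_mono) auto
  also have "\<dots> = N * M" using assms by (cases M) auto
  finally show ?thesis using assms by (auto simp: pair_index_def)
qed

lemma pair_index_inj:
  assumes "i \<in> {1..N}" "i' \<in> {1..N}" "1 \<le> j" "1 \<le> j'" "pair_index N i j = pair_index N i' j'"
  shows "i = i' \<and> j = j'"
  using pair_index_mod_div[of i N j] pair_index_mod_div[of i' N j'] assms by auto

lemma pair_index_cases:
  assumes "x \<in> {1..N * M}"
  obtains i j where "i \<in> {1..N}" "j \<in> {1..M}" "x = pair_index N i j"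
proof
  have N: "0 < N" using assms by (cases N) auto
  have x: "x - 1 < M * N" using assms by (auto simp: mult.commute)
  show "(x - 1) mod N + 1 \<in> {1..N}" using N by (simp add: Suc_leI)
  show "(x - 1) div N + 1 \<in> {1..M}" using x by (auto intro!: Suc_leI less_mult_imp_div_less)
  show "x = pair_index N ((x - 1) mod N + 1) ((x - 1) div N + 1)"
    using assms by (simp add: pair_index_def)
qed

lemma pair_index_bij: "bij_betw (\<lambda>(i, j). pair_index N i j) ({1..N} \<times> {1..M}) {1..N * M}"
proof (rule bij_betw_imageI)
  show "inj_on (\<lambda>(i, j). pair_index N i j) ({1..N} \<times> {1..M})"
  proof (rule inj_onI)
    fix p q assume "p \<in> {1..N} \<times> {1..M}" "q \<in> {1..N} \<times> {1..M}"
      and "(\<lambda>(i, j). pair_index N i j) p = (\<lambda>(i, j). pair_index N i j) q"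
    then show "p = q" using pair_index_inj[of "fst p" N "fst q" "snd p" "snd q"]
      by (auto simp: case_prod_beta prod_eq_iff)
  qed
  show "(\<lambda>(i, j). pair_index N i j) ` ({1..N} \<times> {1..M}) = {1..N * M}"
  proof
    show "(\<lambda>(i, j). pair_index N i j) ` ({1..N} \<times> {1..M}) \<subseteq> {1..N * M}"
      using pair_index_range by auto
    show "{1..N * M} \<subseteq> (\<lambda>(i, j). pair_index N i j) ` ({1..N} \<times> {1..M})"
    proof
      fix x assume "x \<in> {1..N * M}"
      then obtain i j where "i \<in> {1..N}" "j \<in> {1..M}" "x = pair_index N i j"
        by (rule pair_index_cases)
      then show "x \<in> (\<lambda>(i, j). pair_index N i j) ` ({1..N} \<times> {1..M})" by force
    qed
  qed
qed

lemma plus_index_pair: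
  assumes "i \<in> {1..2 ^ p}" "1 \<le> j"
  shows "plus_index (pair_index (2 ^ p) i j) \<longleftrightarrow> (plus_index i \<longleftrightarrow> plus_index j)"
proof -
  obtain i' where i: "i = Suc i'" using assms by (cases i) auto
  then have "pair_index (2 ^ p) i j - 1 = i' + 2 ^ p * (j - 1)" "i' < 2 ^ p"
    using assms by (simp_all add: pair_index_def)
  then show ?thesis using i by (simp add: plus_index_def popcount_add)
qed

lemma smash_map_pair:
  assumes "i \<in> {1..N}" "1 \<le> j"
  shows "smash_map N a f g (pair_index N i j) = (if f i = 0 \<or> g j = 0 then 0 else pair_index a (f i) (g j))"
  using pair_index_mod_div[of i N j] assms
  by (auto simp: smash_map_def Let_def pair_index_def)

lemma HZ_simps:
  "bpt HZ n = (\<lambda>i. 0)"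
  "act HZ n m f v = (\<lambda>j. if 1 \<le> j \<and> j \<le> m then (\<Sum>i\<in>{i. 1 \<le> i \<and> i \<le> n \<and> f i = j}. v i) else 0)"
  "mul HZ n m v w = (\<lambda>k. if 1 \<le> k \<and> k \<le> n * m
                    then v ((k - 1) mod n + 1) * w ((k - 1) div n + 1) else 0)"
  "one HZ = (\<lambda>i. if i = 1 then 1 else 0)"
  by (simp_all add: HZ_def)

lemma HZ_carr_iff: "v \<in> carr HZ n \<longleftrightarrow> (\<forall>i. i \<notin> {1..n} \<longrightarrow> v i = 0)"
proof -
  have "\<And>i::nat. i \<notin> {1..n} \<longleftrightarrow> i = 0 \<or> n < i" by auto
  then show ?thesis by (simp add: HZ_def)
qed

lemma HZ_act_carr: "act HZ n m f v \<in> carr HZ m"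
  by (simp add: HZ_simps HZ_carr_iff)

lemma HZ_act_outside: "i \<notin> {1..k} \<Longrightarrow> act HZ n k f v i = 0"
  by (auto simp: HZ_simps)

lemma HZ_act_ext:
  assumes "\<And>j. j \<in> {1..k} \<Longrightarrow> act HZ n k f v j = act HZ n' k g w j"
  shows "act HZ n k f v = act HZ n' k g w"
  using assms by (auto simp: HZ_simps)

lemma HZ_mul_pair:
  assumes "i \<in> {1..N}" "j \<in> {1..M}"
  shows "mul HZ N M v w (pair_index N i j) = v i * w j"
  using pair_index_range[OF assms] pair_index_mod_div[of i N j] assms by (simp add: HZ_simps)

lemma HZ_mul_eqI:
  assumes u: "u \<in> carr HZ (N * M)"
    and val: "\<And>i j. i \<in> {1..N} \<Longrightarrow> j \<in> {1..M} \<Longrightarrow> u (pair_index N i j) = v i * w j"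
  shows "mul HZ N M v w = u"
proof
  fix x show "mul HZ N M v w x = u x"
  proof (cases "x \<in> {1..N * M}")
    case True
    then obtain i j where "i \<in> {1..N}" "j \<in> {1..M}" "x = pair_index N i j"
      by (rule pair_index_cases)
    then show ?thesis using HZ_mul_pair val by simp
  next
    case False then show ?thesis using u by (auto simp: HZ_simps HZ_carr_iff)
  qed
qed

lemma pm1_val: "pm1 n x = (if x \<in> {1..2 ^ n} then (if plus_index x then 1 else -1) else 0)"
proof (induction n arbitrary: x)
  case 0 then show ?case by (simp add: pm1_def HZ_simps plus_index_def)
next
  case (Suc n)
  have "mul HZ (2 ^ n) 2 (pm1 n) one_minus_one
      = (\<lambda>x. if x \<in> {1..2 ^ Suc n} then (if plus_index x then 1 else -1) else 0)"
  proof (rule HZ_mul_eqI)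
    fix i j :: nat assume ij: "i \<in> {1..2 ^ n}" "j \<in> {1..2}"
    have "plus_index 1" "\<not> plus_index 2" by (simp_all add: plus_index_def)
    moreover have "j = 1 \<or> j = 2" using ij by auto
    ultimately show "(if pair_index (2 ^ n) i j \<in> {1..2 ^ Suc n}
                 then (if plus_index (pair_index (2 ^ n) i j) then 1 else -1) else 0)
             = pm1 n i * one_minus_one j"
      using pair_index_range[OF ij] plus_index_pair[of i n j] ij Suc.IH[of i]
      by (elim disjE) (auto simp: one_minus_one_def)
  qed (simp add: HZ_carr_iff)
  then show ?case by (simp add: pm1_def)
qed

lemma pm1_carr: "pm1 n \<in> carr HZ (2 ^ n)"
  by (simp add: HZ_carr_iff pm1_val)

lemma mul_pm1: "mul HZ (2 ^ p) (2 ^ q) (pm1 p) (pm1 q) = pm1 (p + q)"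
proof (rule HZ_mul_eqI)
  show "pm1 (p + q) \<in> carr HZ (2 ^ p * 2 ^ q)" using pm1_carr[of "p + q"] by (simp add: power_add)
  fix i j :: nat assume ij: "i \<in> {1..2 ^ p}" "j \<in> {1..2 ^ q}"
  then show "pm1 (p + q) (pair_index (2 ^ p) i j) = pm1 p i * pm1 q j"
    using pair_index_range[OF ij] plus_index_pair[of i p j] by (auto simp: pm1_val power_add)
qed

lemma HZ_act_id: "v \<in> carr HZ n \<Longrightarrow> act HZ n n id v = v"
proof
  fix j assume v: "v \<in> carr HZ n"
  show "act HZ n n id v j = v j"
  proof (cases "j \<in> {1..n}")
    case True
    then have "{i. 1 \<le> i \<and> i \<le> n \<and> id i = j} = {j}" by auto
    then show ?thesis using True by (simp add: HZ_simps)
  next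
    case False then show ?thesis using v by (simp add: HZ_simps HZ_carr_iff del: atLeastAtMost_iff)
  qed
qed

lemma HZ_act_comp:
  assumes f: "pmap n m f" and g: "pmap m l g"
  shows "act HZ m l g (act HZ n m f v) = act HZ n l (g \<circ> f) v"
proof (rule HZ_act_ext)
  fix j :: nat assume j: "j \<in> {1..l}"
  let ?S = "{x. 1 \<le> x \<and> x \<le> n \<and> g (f x) = j}"
  let ?T = "{y. 1 \<le> y \<and> y \<le> m \<and> g y = j}"
  have "f ` ?S \<subseteq> ?T"
  proof clarify
    fix x assume x: "1 \<le> x" "x \<le> n" "j = g (f x)"
    then have "g (f x) \<noteq> 0" using j by simp
    then have "f x \<noteq> 0" using g unfolding pmap_def by metis
    then show "1 \<le> f x \<and> f x \<le> m \<and> g (f x) = g (f x)" using f x by (auto simp: pmap_def)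
  qed
  then have "(\<Sum>y\<in>?T. \<Sum>x\<in>{x. x \<in> ?S \<and> f x = y}. v x) = (\<Sum>x\<in>?S. v x)"
    by (intro sum.group) auto
  moreover have "\<And>y. y \<in> ?T \<Longrightarrow> {x. x \<in> ?S \<and> f x = y} = {x. 1 \<le> x \<and> x \<le> n \<and> f x = y}"
    by auto
  ultimately show "act HZ m l g (act HZ n m f v) j = act HZ n l (g \<circ> f) v j"
    using j by (simp add: HZ_simps)
qed

lemma pmap_comp: "pmap n m f \<Longrightarrow> pmap m l g \<Longrightarrow> pmap n l (g \<circ> f)"
  by (auto simp: pmap_def)

lemma pmap_smash:
  assumes f: "pmap N a f" and g: "pmap M b g"
  shows "pmap (N * M) (a * b) (smash_map N a f g)"
  unfolding pmap_def
proof (intro conjI allI impI)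
  show "smash_map N a f g 0 = 0" by (simp add: smash_map_def)
  fix x assume "x \<le> N * M"
  show "smash_map N a f g x \<le> a * b"
  proof (cases "x = 0")
    case False
    then have "x \<in> {1..N * M}" using \<open>x \<le> N * M\<close> by simp
    then obtain i j where ij: "i \<in> {1..N}" "j \<in> {1..M}" "x = pair_index N i j"
      by (rule pair_index_cases)
    then have "f i \<le> a" "g j \<le> b" using f g by (auto simp: pmap_def)
    then show ?thesis using ij pair_index_range[of "f i" a "g j" b] by (auto simp: smash_map_pair)
  qed (simp add: smash_map_def)
qed

lemma smash_fibre:
  assumes f: "pmap N a f" and g: "pmap M b g" and i0: "i0 \<in> {1..a}" and j0: "1 \<le> j0"
  shows "{x. 1 \<le> x \<and> x \<le> N * M \<and> smash_map N a f g x = pair_index a i0 j0}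
       = (\<lambda>(i, j). pair_index N i j) ` ({i. 1 \<le> i \<and> i \<le> N \<and> f i = i0} \<times> {j. 1 \<le> j \<and> j \<le> M \<and> g j = j0})"
    (is "?T = ?h ` (?F \<times> ?G)")
proof
  show "?h ` (?F \<times> ?G) \<subseteq> ?T"
    using i0 j0 pair_index_range[of _ N _ M] by (auto simp: smash_map_pair)
  show "?T \<subseteq> ?h ` (?F \<times> ?G)"
  proof
    fix x assume x: "x \<in> ?T"
    then have "x \<in> {1..N * M}" by simp
    then obtain i j where ij: "i \<in> {1..N}" "j \<in> {1..M}" "x = pair_index N i j"
      by (rule pair_index_cases)
    with x have sm: "smash_map N a f g (pair_index N i j) = pair_index a i0 j0" by simp
    have "pair_index a i0 j0 \<noteq> 0" using i0 by (simp add: pair_index_def)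
    then have nz: "f i \<noteq> 0" "g j \<noteq> 0" and eq: "pair_index a (f i) (g j) = pair_index a i0 j0"
      using sm ij by (auto simp: smash_map_pair split: if_splits)
    have "f i \<le> a" using f ij by (auto simp: pmap_def)
    then have "f i = i0 \<and> g j = j0" using pair_index_inj[OF _ i0 _ j0 eq] nz by auto
    then show "x \<in> ?h ` (?F \<times> ?G)" using ij by auto
  qed
qed

lemma HZ_smash:
  assumes f: "pmap N a f" and g: "pmap M b g"
  shows "mul HZ a b (act HZ N a f v) (act HZ M b g w)
       = act HZ (N * M) (a * b) (smash_map N a f g) (mul HZ N M v w)"
proof (rule HZ_mul_eqI[OF HZ_act_carr])
  fix i0 j0 assume ij0: "i0 \<in> {1..a}" "j0 \<in> {1..b}"
  let ?h = "\<lambda>(i, j). pair_index N i j"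
  let ?F = "{i. 1 \<le> i \<and> i \<le> N \<and> f i = i0}" and ?G = "{j. 1 \<le> j \<and> j \<le> M \<and> g j = j0}"
  have inj: "inj_on ?h (?F \<times> ?G)"
    using bij_betw_imp_inj_on[OF pair_index_bij[of N M]] by (rule inj_on_subset) auto
  have "act HZ (N * M) (a * b) (smash_map N a f g) (mul HZ N M v w) (pair_index a i0 j0)
      = (\<Sum>x\<in>?h ` (?F \<times> ?G). mul HZ N M v w x)"
    using pair_index_range[OF ij0] smash_fibre[OF f g ij0(1)] ij0 by (simp add: HZ_simps)
  also have "\<dots> = (\<Sum>(i, j)\<in>?F \<times> ?G. v i * w j)"
    by (rule sum.reindex_cong[OF inj refl]) (auto simp: HZ_mul_pair)
  also have "\<dots> = (\<Sum>i\<in>?F. v i) * (\<Sum>j\<in>?G. w j)"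
    by (simp add: sum_product sum.cartesian_product)
  also have "\<dots> = act HZ N a f v i0 * act HZ M b g w j0"
    using ij0 by (simp add: HZ_simps)
  finally show "act HZ (N * M) (a * b) (smash_map N a f g) (mul HZ N M v w) (pair_index a i0 j0)
      = act HZ N a f v i0 * act HZ M b g w j0" .
qed

lemma HZ_act_apply: "i \<in> {1..k} \<Longrightarrow> act HZ n k f v i = (\<Sum>x\<in>{x\<in>{1..n}. f x = i}. v x)"
proof -
  have "{x. 1 \<le> x \<and> x \<le> n \<and> f x = i} = {x\<in>{1..n}. f x = i}" by auto
  then show "i \<in> {1..k} \<Longrightarrow> ?thesis" by (simp add: HZ_simps)
qed

lemma pm1_Suc_low: "x \<le> 2 ^ n \<Longrightarrow> pm1 (Suc n) x = pm1 n x"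
  by (simp add: pm1_val)

lemma pm1_Suc_high: "c \<in> {1..2 ^ n} \<Longrightarrow> pm1 (Suc n) (2 ^ n + c) = - pm1 n c"
  using plus_index_pair[of c n 2] pair_index_range[of c "2 ^ n" 2 2]
  by (simp add: pm1_val pair_index_def plus_index_def add.commute)

(* Every vector of HZ[k] is the image of some (1,-1)^n, n >= 1, under a
   pointed map: extending a map [2^n] -> [k] to [2^(n+1)] by sending one upper position c to j
   (and the other upper positions to the basepoint) adds -pm1 n c = +-1 to coordinate j. *)
definition ext_map :: "nat \<Rightarrow> (nat \<Rightarrow> nat) \<Rightarrow> nat \<Rightarrow> nat \<Rightarrow> nat \<Rightarrow> nat" where
  "ext_map n f c j x = (if x \<le> 2 ^ n then f x else if x = 2 ^ n + c then j else 0)"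

lemma HZ_act_ext_map:
  assumes f: "pmap (2 ^ n) k f" and c: "c \<in> {1..2 ^ n}" and j: "j \<in> {1..k}"
  shows "act HZ (2 ^ Suc n) k (ext_map n f c j) (pm1 (Suc n))
       = (act HZ (2 ^ n) k f (pm1 n))(j := act HZ (2 ^ n) k f (pm1 n) j - pm1 n c)"
proof
  fix i show "act HZ (2 ^ Suc n) k (ext_map n f c j) (pm1 (Suc n)) i
       = ((act HZ (2 ^ n) k f (pm1 n))(j := act HZ (2 ^ n) k f (pm1 n) j - pm1 n c)) i"
  proof (cases "i \<in> {1..k}")
    case True
    let ?A = "{x\<in>{1..2 ^ n}. f x = i}" and ?B = "if i = j then {2 ^ n + c} else {}"
    have fibre: "{x\<in>{1..2 ^ Suc n}. ext_map n f c j x = i} = ?A \<union> ?B"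
      using True f c by (auto simp: ext_map_def pmap_def)
    have "act HZ (2 ^ Suc n) k (ext_map n f c j) (pm1 (Suc n)) i
        = (\<Sum>x\<in>?A. pm1 (Suc n) x) + (\<Sum>x\<in>?B. pm1 (Suc n) x)"
      unfolding HZ_act_apply[OF True] fibre by (rule sum.union_disjoint) (use c in auto)
    also have "(\<Sum>x\<in>?A. pm1 (Suc n) x) = act HZ (2 ^ n) k f (pm1 n) i"
      unfolding HZ_act_apply[OF True] by (rule sum.cong) (auto simp: pm1_Suc_low)
    finally show ?thesis using pm1_Suc_high[OF c] by simp
  next
    case False
    then have "i \<noteq> j" using j by auto
    then show ?thesis using False by (simp add: HZ_act_outside)
  qed
qed

definition presented :: "nat \<Rightarrow> (nat \<Rightarrow> int) \<Rightarrow> bool" where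
  "presented k v \<longleftrightarrow> (\<exists>n f. 1 \<le> n \<and> pmap (2 ^ n) k f \<and> act HZ (2 ^ n) k f (pm1 n) = v)"

lemma presented_zero: "presented k (\<lambda>i. 0)"
proof -
  have "act HZ (2 ^ 1) k (\<lambda>x. 0) (pm1 1) = (\<lambda>i. 0)" by (auto simp: HZ_simps)
  moreover have "pmap (2 ^ 1) k (\<lambda>x. 0)" by (simp add: pmap_def)
  ultimately show ?thesis unfolding presented_def by blast
qed

lemma presented_step:
  assumes v: "presented k v" and j: "j \<in> {1..k}" and e: "e \<in> {1, -1}"
  shows "presented k (v(j := v j + e))"
proof -
  obtain n f where nf: "1 \<le> n" "pmap (2 ^ n) k f" "act HZ (2 ^ n) k f (pm1 n) = v"
    using v unfolding presented_def by blast
  have "(2::nat) \<le> 2 ^ n" using nf(1) by (cases n) auto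
  moreover have "plus_index 1" "\<not> plus_index 2" by (simp_all add: plus_index_def)
  ultimately have "(if e = 1 then 2 else 1 :: nat) \<in> {1..2 ^ n} \<and> pm1 n (if e = 1 then 2 else 1) = - e"
    using e by (auto simp: pm1_val)
  then obtain c where c: "c \<in> {1..2 ^ n}" "pm1 n c = - e" by blast
  have "act HZ (2 ^ Suc n) k (ext_map n f c j) (pm1 (Suc n)) = v(j := v j + e)"
    using HZ_act_ext_map[OF nf(2) c(1) j] nf(3) c(2) by simp
  moreover have "pmap (2 ^ Suc n) k (ext_map n f c j)" using nf(2) j by (auto simp: pmap_def ext_map_def)
  ultimately show ?thesis unfolding presented_def using nf(1)
    by (intro exI[of _ "Suc n"] exI[of _ "ext_map n f c j"]) simp
qed

lemma presented_shift:
  assumes v: "presented k v" and j: "j \<in> {1..k}" and e: "e \<in> {1, -1}"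
  shows "presented k (v(j := v j + e * int m))"
proof (induction m)
  case (Suc m)
  have "presented k ((v(j := v j + e * int m))(j := (v(j := v j + e * int m)) j + e))"
    by (rule presented_step[OF Suc j e])
  then show ?case by (simp add: algebra_simps) (simp add: fun_upd_def)
qed (use v in simp)

lemma presented_bounded:
  assumes "v \<in> carr HZ k" "\<forall>i>m. v i = 0"
  shows "presented k v"
  using assms
proof (induction m arbitrary: v)
  case 0
  have "v = (\<lambda>i. 0)"
  proof
    fix i show "v i = 0" using 0 by (cases "i = 0") (auto simp: HZ_carr_iff)
  qed
  then show ?case using presented_zero by simp
next
  case (Suc m)
  let ?v' = "v(Suc m := 0)"
  show ?case
  proof (cases "v (Suc m) = 0")
    case True
    have "\<forall>i>m. v i = 0"
    proof (intro allI impI)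
      fix i assume "m < i" then show "v i = 0" using Suc.prems(2) True by (cases "i = Suc m") auto
    qed
    then show ?thesis using Suc.IH Suc.prems(1) by blast
  next
    case False
    then have j: "Suc m \<in> {1..k}" using Suc.prems(1) by (auto simp: HZ_carr_iff)
    have "presented k ?v'" using Suc.IH Suc.prems by (auto simp: HZ_carr_iff)
    let ?e = "if v (Suc m) \<ge> 0 then 1 else -1 :: int"
    have "presented k (?v'(Suc m := ?v' (Suc m) + ?e * int (nat \<bar>v (Suc m)\<bar>)))"
      by (rule presented_shift[OF _ j]) (use \<open>presented k ?v'\<close> in simp_all)
    then show ?thesis by (simp split: if_splits)
  qed
qed

lemma presentation:
  assumes "v \<in> carr HZ k"
  obtains n f where "pmap (2 ^ n) k f" "act HZ (2 ^ n) k f (pm1 n) = v"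
  using presented_bounded[OF assms, of k] assms unfolding presented_def by (auto simp: HZ_carr_iff)

lemma HZ_act_pm1_count:
  assumes "i \<in> {1..k}"
  shows "act HZ (2 ^ n) k f (pm1 n) i
       = int (card {x\<in>{1..2 ^ n}. plus_index x \<and> f x = i})
         - int (card {x\<in>{1..2 ^ n}. \<not> plus_index x \<and> f x = i})"
proof -
  let ?F = "{x\<in>{1..2 ^ n}. f x = i}"
  have "act HZ (2 ^ n) k f (pm1 n) i = (\<Sum>x\<in>?F. if plus_index x then 1 else -1)"
    unfolding HZ_act_apply[OF assms] by (rule sum.cong) (auto simp: pm1_val)
  also have "\<dots> = (\<Sum>x\<in>?F \<inter> {x. plus_index x}. 1) + (\<Sum>x\<in>?F \<inter> - {x. plus_index x}. -1)"
    by (rule sum.If_cases) simp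
  also have "?F \<inter> {x. plus_index x} = {x\<in>{1..2 ^ n}. plus_index x \<and> f x = i}" by auto
  also have "?F \<inter> - {x. plus_index x} = {x\<in>{1..2 ^ n}. \<not> plus_index x \<and> f x = i}" by auto
  finally show ?thesis by simp
qed

(* A map is sign coherent if no nonzero fibre contains positions of both signs; for such maps
   f((1,-1)^n) determines the number of positions of each sign in every fibre. *)
definition sign_coherent :: "nat \<Rightarrow> (nat \<Rightarrow> nat) \<Rightarrow> bool" where
  "sign_coherent N f \<longleftrightarrow>
     (\<forall>x\<in>{1..N}. \<forall>y\<in>{1..N}. f x = f y \<longrightarrow> f x \<noteq> 0 \<longrightarrow> plus_index x = plus_index y)"

lemma coherent_one_sided:
  assumes "sign_coherent N h" "j \<noteq> 0"
  shows "card {x\<in>{1..N}. plus_index x \<and> h x = j} = 0 \<or> card {x\<in>{1..N}. \<not> plus_index x \<and> h x = j} = 0"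
proof -
  have "{x\<in>{1..N}. plus_index x \<and> h x = j} = {} \<or> {x\<in>{1..N}. \<not> plus_index x \<and> h x = j} = {}"
  proof (rule ccontr)
    assume "\<not> ({x\<in>{1..N}. plus_index x \<and> h x = j} = {} \<or> {x\<in>{1..N}. \<not> plus_index x \<and> h x = j} = {})"
    then obtain x y where "x \<in> {1..N}" "plus_index x" "h x = j" "y \<in> {1..N}" "\<not> plus_index y" "h y = j"
      by auto
    then show False using assms unfolding sign_coherent_def by metis
  qed
  then show ?thesis by auto
qed

lemma coherent_fibre_card:
  assumes f: "pmap (2 ^ n) k f" "sign_coherent (2 ^ n) f"
    and g: "pmap (2 ^ n) k g" "sign_coherent (2 ^ n) g"
    and same: "act HZ (2 ^ n) k f (pm1 n) = act HZ (2 ^ n) k g (pm1 n)" and j: "j \<noteq> 0"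
  shows "card {x\<in>{1..2 ^ n}. plus_index x = s \<and> f x = j} = card {x\<in>{1..2 ^ n}. plus_index x = s \<and> g x = j}"
proof (cases "j \<le> k")
  case True
  let ?X = "{1..2 ^ n::nat}"
  have jk: "j \<in> {1..k}" using True j by simp
  have "int (card {x\<in>?X. plus_index x \<and> f x = j}) - int (card {x\<in>?X. \<not> plus_index x \<and> f x = j})
      = act HZ (2 ^ n) k f (pm1 n) j" by (rule HZ_act_pm1_count[OF jk, symmetric])
  also have "\<dots> = act HZ (2 ^ n) k g (pm1 n) j" using same by simp
  also have "\<dots> = int (card {x\<in>?X. plus_index x \<and> g x = j}) - int (card {x\<in>?X. \<not> plus_index x \<and> g x = j})"
    by (rule HZ_act_pm1_count[OF jk])
  finally have "int (card {x\<in>?X. plus_index x \<and> f x = j}) - int (card {x\<in>?X. \<not> plus_index x \<and> f x = j})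
      = int (card {x\<in>?X. plus_index x \<and> g x = j}) - int (card {x\<in>?X. \<not> plus_index x \<and> g x = j})" .
  moreover have "\<And>p m p' m' :: nat. int p - int m = int p' - int m' \<Longrightarrow> p = 0 \<or> m = 0 \<Longrightarrow>
      p' = 0 \<or> m' = 0 \<Longrightarrow> p = p' \<and> m = m'" by auto
  ultimately have "card {x\<in>?X. plus_index x \<and> f x = j} = card {x\<in>?X. plus_index x \<and> g x = j}"
    "card {x\<in>?X. \<not> plus_index x \<and> f x = j} = card {x\<in>?X. \<not> plus_index x \<and> g x = j}"
    using coherent_one_sided[OF f(2) j] coherent_one_sided[OF g(2) j] by blast+
  then show ?thesis by (cases s) simp_all
next
  case False
  then have empty: "{x\<in>{1..2 ^ n}. plus_index x = s \<and> h x = j} = {}" if "pmap (2 ^ n) k h" for h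
    using that by (force simp: pmap_def)
  show ?thesis by (simp only: empty[OF f(1)] empty[OF g(1)])
qed

lemma card_zero_fibre:
  fixes F :: "'a \<Rightarrow> nat"
  assumes "finite X" "\<forall>x\<in>X. F x \<le> k"
  shows "card {x\<in>X. F x = 0} = card X - (\<Sum>j\<in>{1..k}. card {x\<in>X. F x = j})"
proof -
  have "(\<Sum>j\<in>{0..k}. \<Sum>x\<in>{x\<in>X. F x = j}. 1) = (\<Sum>x\<in>X. 1::nat)"
    using assms by (intro sum.group) auto
  moreover have "{0..k} = insert 0 {1..k}" by auto
  ultimately show ?thesis by simp
qed

lemma fibre_bij:
  assumes fin: "finite X" and card: "\<And>y. card {x\<in>X. F x = y} = card {x\<in>X. G x = y}"
  shows "\<exists>\<pi>. bij_betw \<pi> X X \<and> (\<forall>x\<in>X. G (\<pi> x) = F x)"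
proof -
  have "\<exists>h. bij_betw h {x\<in>X. F x = y} {x\<in>X. G x = y}" for y
    using fin card by (intro finite_same_card_bij) auto
  then obtain b where b: "\<And>y. bij_betw (b y) {x\<in>X. F x = y} {x\<in>X. G x = y}" by metis
  define \<pi> where "\<pi> x = b (F x) x" for x
  have "bij_betw \<pi> {x\<in>X. F x = y} {x\<in>X. G x = y}" for y
    using b[of y] by (rule bij_betw_cong[THEN iffD1, rotated]) (simp add: \<pi>_def)
  then have "bij_betw \<pi> (\<Union>y. {x\<in>X. F x = y}) (\<Union>y. {x\<in>X. G x = y})"
    by (intro bij_betw_UNION_disjoint) (auto simp: disjoint_family_on_def)
  moreover have "(\<Union>y. {x\<in>X. F x = y}) = X" "(\<Union>y. {x\<in>X. G x = y}) = X" by auto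
  moreover have "G (\<pi> x) = F x" if "x \<in> X" for x
    using that bij_betwE[OF b[of "F x"]] by (auto simp: \<pi>_def)
  ultimately show ?thesis by auto
qed

lemma coherent_perm:
  assumes f: "pmap (2 ^ n) k f" "sign_coherent (2 ^ n) f"
    and g: "pmap (2 ^ n) k g" "sign_coherent (2 ^ n) g"
    and same: "act HZ (2 ^ n) k f (pm1 n) = act HZ (2 ^ n) k g (pm1 n)"
  shows "\<exists>\<pi>. bij_betw \<pi> {1..2 ^ n} {1..2 ^ n}
           \<and> (\<forall>x\<in>{1..2 ^ n}. plus_index (\<pi> x) = plus_index x \<and> g (\<pi> x) = f x)"
proof -
  let ?X = "{1..2 ^ n::nat}"
  have nonzero: "card {x\<in>?X. plus_index x = s \<and> f x = j} = card {x\<in>?X. plus_index x = s \<and> g x = j}"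
    if "j \<noteq> 0" for s j by (rule coherent_fibre_card[OF f g same that])
  have zero: "card {x\<in>?X. plus_index x = s \<and> f x = 0} = card {x\<in>?X. plus_index x = s \<and> g x = 0}" for s
  proof -
    let ?Xs = "{x\<in>?X. plus_index x = s}"
    have "card {x\<in>?Xs. f x = 0} = card ?Xs - (\<Sum>j\<in>{1..k}. card {x\<in>?Xs. f x = j})"
      using f(1) by (intro card_zero_fibre) (auto simp: pmap_def)
    also have "(\<Sum>j\<in>{1..k}. card {x\<in>?Xs. f x = j}) = (\<Sum>j\<in>{1..k}. card {x\<in>?Xs. g x = j})"
      using nonzero by (intro sum.cong) (auto simp: conj_assoc)
    also have "card ?Xs - \<dots> = card {x\<in>?Xs. g x = 0}"
      using g(1) by (intro card_zero_fibre[symmetric]) (auto simp: pmap_def)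
    finally show ?thesis by (simp add: conj_assoc)
  qed
  have "card {x\<in>?X. (f x, plus_index x) = y} = card {x\<in>?X. (g x, plus_index x) = y}" for y
    using nonzero[of "fst y" "snd y"] zero[of "snd y"] by (cases "fst y = 0") (auto simp: prod_eq_iff conj_commute)
  then show ?thesis using fibre_bij[of ?X "\<lambda>x. (f x, plus_index x)" "\<lambda>x. (g x, plus_index x)"] by auto
qed

lemma HZ_merge:
  assumes ab: "a \<in> {1..2 ^ n}" "b \<in> {1..2 ^ n}" "plus_index a \<noteq> plus_index b" and fab: "f a = f b"
  shows "act HZ (2 ^ n) k (f(a := 0, b := 0)) (pm1 n) = act HZ (2 ^ n) k f (pm1 n)"
proof (rule HZ_act_ext)
  fix i assume i: "i \<in> {1..k}"
  let ?A = "{x\<in>{1..2 ^ n}. f x = i}" and ?B = "{x\<in>{1..2 ^ n}. (f(a := 0, b := 0)) x = i}"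
  have "a \<noteq> b" using ab by auto
  show "act HZ (2 ^ n) k (f(a := 0, b := 0)) (pm1 n) i = act HZ (2 ^ n) k f (pm1 n) i"
  proof (cases "f a = i")
    case True
    then have AB: "?A = ?B \<union> {a, b}" "?B \<inter> {a, b} = {}" using ab fab i by auto
    have "(\<Sum>x\<in>?A. pm1 n x) = (\<Sum>x\<in>?B. pm1 n x) + (\<Sum>x\<in>{a, b}. pm1 n x)"
      unfolding AB(1) by (rule sum.union_disjoint) (use AB in auto)
    moreover have "(\<Sum>x\<in>{a, b}. pm1 n x) = 0" using ab \<open>a \<noteq> b\<close> by (auto simp: pm1_val)
    ultimately show ?thesis by (simp add: HZ_act_apply[OF i])
  next
    case False
    then have "?A = ?B" using fab i by auto
    then show ?thesis by (simp only: HZ_act_apply[OF i])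
  qed
qed

(* Changing the level.  A map on [2^n] is extended to [2^(n+1)] by the basepoint on the upper
   half; on the Gamma-ring side this is the multiplication by the unit condition p_2(r) = 1. *)
definition lift_map :: "nat \<Rightarrow> (nat \<Rightarrow> nat) \<Rightarrow> nat \<Rightarrow> nat" where
  "lift_map n f x = (if x \<le> 2 ^ n then f x else 0)"

lemma pmap_lift: "pmap (2 ^ n) k f \<Longrightarrow> pmap (2 ^ Suc n) k (lift_map n f)"
  by (auto simp: pmap_def lift_map_def)

lemma HZ_lift:
  assumes f: "pmap (2 ^ n) k f"
  shows "act HZ (2 ^ Suc n) k (lift_map n f) (pm1 (Suc n)) = act HZ (2 ^ n) k f (pm1 n)"
proof (rule HZ_act_ext)
  fix i assume i: "i \<in> {1..k}"
  have "{x\<in>{1..2 ^ Suc n}. lift_map n f x = i} = {x\<in>{1..2 ^ n}. f x = i}"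
    using i by (auto simp: lift_map_def)
  then show "act HZ (2 ^ Suc n) k (lift_map n f) (pm1 (Suc n)) i = act HZ (2 ^ n) k f (pm1 n) i"
    unfolding HZ_act_apply[OF i] by (auto intro: sum.cong simp: pm1_Suc_low)
qed

lemma lift_map_comp: "pmap (2 ^ n) k f \<Longrightarrow> lift_map n f = f \<circ> lift_map n id"
  by (auto simp: lift_map_def pmap_def)

lemma lift_map_smash:
  "x \<le> 2 ^ Suc n \<Longrightarrow> lift_map n id x = smash_map (2 ^ n) (2 ^ n) id (pmap_p 2 2) x"
proof (cases "x = 0")
  case False
  assume "x \<le> 2 ^ Suc n"
  with False obtain i j where ij: "i \<in> {1..2 ^ n}" "j \<in> {1..2}" "x = pair_index (2 ^ n) i j"
    using pair_index_cases[of x "2 ^ n" 2] by auto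
  then have "j = 1 \<or> j = 2" by auto
  then show ?thesis using ij smash_map_pair[of i "2 ^ n" j "2 ^ n" id "pmap_p 2 2"]
    by (elim disjE) (simp_all add: lift_map_def pmap_p_def pair_index_def)
qed (simp add: lift_map_def smash_map_def)

(* Merging two positions a < b of [N]: the map s_{a,b,1} : [N] -> [N-1] identifies a and b
   with 1, and agrees with d_1 p_a p_b off {a, b}.  The following section of s_{a,b,1} lets any
   pointed map f with f a = f b be factorised through s_{a,b,1}. *)
definition merge_section :: "nat \<Rightarrow> nat \<Rightarrow> nat \<Rightarrow> nat" where
  "merge_section a b y =
     (if y = 0 then 0 else if y = 1 then a else if y \<le> a then y - 1 else if y < b then y else y + 1)"

lemma merge_pmaps:
  assumes "0 < a" "a < b" "b \<le> N" and f: "pmap N k f"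
  shows "pmap N (N - 1) (pmap_s N a b 1)" "pmap (N - 1) k (f \<circ> merge_section a b)"
    "pmap N (N - 1) (pmap_p N b)" "pmap (N - 1) (N - 2) (pmap_p (N - 1) a)"
    "pmap (N - 2) (N - 1) (pmap_d (N - 1) 1)"
  using assms by (auto simp: pmap_def pmap_s_def pmap_p_def pmap_d_def merge_section_def Let_def)

lemma merge_section_inverse:
  assumes "0 < a" "a < b" "x \<notin> {0, a, b}"
  shows "merge_section a b (pmap_s N a b 1 x) = x"
  using assms unfolding merge_section_def pmap_s_def Let_def by auto

lemma merge_drop_pair:
  assumes "0 < a" "a < b"
  shows "(pmap_d (N - 1) 1 \<circ> pmap_p (N - 1) a \<circ> pmap_p N b) x
       = (if x \<in> {a, b} then 0 else pmap_s N a b 1 x)"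
  using assms unfolding pmap_d_def pmap_p_def pmap_s_def Let_def by auto

lemma merge_factorisation:
  assumes ab: "0 < a" "a < b" and f: "pmap N k f" "f a = f b"
  shows "(f \<circ> merge_section a b \<circ> pmap_s N a b 1) x = f x"
    and "(f \<circ> merge_section a b \<circ> (pmap_d (N - 1) 1 \<circ> pmap_p (N - 1) a \<circ> pmap_p N b)) x
         = (f(a := 0, b := 0)) x"
proof -
  have pair: "merge_section a b (pmap_s N a b 1 x) = a" if "x \<in> {a, b}"
    using that ab by (auto simp: merge_section_def pmap_s_def)
  show "(f \<circ> merge_section a b \<circ> pmap_s N a b 1) x = f x"
    using pair merge_section_inverse[OF ab, of x N] f ab
    by (cases "x \<in> {0, a, b}") (auto simp: pmap_def pmap_s_def merge_section_def)
  then show "(f \<circ> merge_section a b \<circ> (pmap_d (N - 1) 1 \<circ> pmap_p (N - 1) a \<circ> pmap_p N b)) x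
         = (f(a := 0, b := 0)) x"
    using merge_drop_pair[OF ab, of N x] f by (auto simp: pmap_def merge_section_def)
qed

definition induced_map :: "'a gring \<Rightarrow> 'a \<Rightarrow> nat \<Rightarrow> (nat \<Rightarrow> int) \<Rightarrow> 'a" where
  "induced_map R r k v =
     (case SOME (n, f). pmap (2 ^ n) k f \<and> act HZ (2 ^ n) k f (pm1 n) = v of
        (n, f) \<Rightarrow> act R (2 ^ n) k f (gpow R r n))"

locale difference_law =
  fixes R :: "'a gring" and r :: 'a
  assumes gamma_ring: "discrete_gamma_ring R" and law: "formal_difference_law R r"
begin

lemma gamma_ring_laws:
  "carr R 0 = {bpt R 0}"
  "\<forall>n m f x. pmap n m f \<longrightarrow> x \<in> carr R n \<longrightarrow> act R n m f x \<in> carr R m"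
  "\<forall>n m f. pmap n m f \<longrightarrow> act R n m f (bpt R n) = bpt R m"
  "\<forall>n m f g x. (\<forall>i\<le>n. f i = g i) \<longrightarrow> x \<in> carr R n \<longrightarrow> act R n m f x = act R n m g x"
  "\<forall>n x. x \<in> carr R n \<longrightarrow> act R n n id x = x"
  "\<forall>n m l f g x. pmap n m f \<longrightarrow> pmap m l g \<longrightarrow> x \<in> carr R n \<longrightarrow>
     act R m l g (act R n m f x) = act R n l (g \<circ> f) x"
  "one R \<in> carr R 1"
  "\<forall>n m x y. x \<in> carr R n \<longrightarrow> y \<in> carr R m \<longrightarrow> mul R n m x y \<in> carr R (n * m)"
  "\<forall>n n' m m' f g x y. pmap n m f \<longrightarrow> pmap n' m' g \<longrightarrow> x \<in> carr R n \<longrightarrow> y \<in> carr R n' \<longrightarrow>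
     mul R m m' (act R n m f x) (act R n' m' g y) =
     act R (n * n') (m * m') (smash_map n m f g) (mul R n n' x y)"
  "\<forall>n m l x y z. x \<in> carr R n \<longrightarrow> y \<in> carr R m \<longrightarrow> z \<in> carr R l \<longrightarrow>
     mul R (n * m) l (mul R n m x y) z = mul R n (m * l) x (mul R m l y z)"
  "\<forall>n x. x \<in> carr R n \<longrightarrow> mul R 1 n (one R) x = x \<and> mul R n 1 x (one R) = x"
  using gamma_ring unfolding discrete_gamma_ring_def by (auto simp only:)

lemmas carr0 = gamma_ring_laws(1)
  and act_carr = gamma_ring_laws(2)[rule_format]
  and act_bpt = gamma_ring_laws(3)[rule_format]
  and act_cong = gamma_ring_laws(4)[rule_format]
  and act_id = gamma_ring_laws(5)[rule_format]
  and act_comp = gamma_ring_laws(6)[rule_format]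
  and one_carr = gamma_ring_laws(7)
  and mul_carr = gamma_ring_laws(8)[rule_format]
  and mul_act = gamma_ring_laws(9)[rule_format]
  and mul_assoc = gamma_ring_laws(10)[rule_format]
  and mul_one_left = gamma_ring_laws(11)[rule_format, THEN conjunct1]
  and mul_one_right = gamma_ring_laws(11)[rule_format, THEN conjunct2]

lemma difference_law_laws:
  "r \<in> carr R 2"
  "act R 2 1 (pmap_p 2 2) r = one R"
  "\<forall>k \<pi>. 1 \<le> k \<longrightarrow> special_perm k \<pi> \<longrightarrow> act R (2 ^ k) (2 ^ k) \<pi> (gpow R r k) = gpow R r k"
  using law unfolding formal_difference_law_def by (auto simp only:)

lemma difference_law_merge:
  "\<forall>k i j l. 1 \<le> k \<longrightarrow> 1 \<le> i \<longrightarrow> i < j \<longrightarrow> j \<le> 2 ^ k \<longrightarrow>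
     ((i \<in> Aplus k \<and> j \<in> Aminus k) \<or> (i \<in> Aminus k \<and> j \<in> Aplus k)) \<longrightarrow>
     1 \<le> l \<longrightarrow> l \<le> 2 ^ k - 1 \<longrightarrow>
     act R (2 ^ k) (2 ^ k - 1) (pmap_s (2 ^ k) i j l) (gpow R r k) =
     act R (2 ^ k - 2) (2 ^ k - 1) (pmap_d (2 ^ k - 1) l)
       (act R (2 ^ k - 1) (2 ^ k - 2) (pmap_p (2 ^ k - 1) i)
         (act R (2 ^ k) (2 ^ k - 1) (pmap_p (2 ^ k) j) (gpow R r k)))"
  using law unfolding formal_difference_law_def by (elim conjE) assumption

lemmas r_carr = difference_law_laws(1)
  and r_unit = difference_law_laws(2)
  and r_special = difference_law_laws(3)[rule_format]
  and r_merge = difference_law_merge[rule_format]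

abbreviation G :: "nat \<Rightarrow> 'a" where "G n \<equiv> gpow R r n"

lemma gpow_carr: "G n \<in> carr R (2 ^ n)"
proof (induction n)
  case (Suc n)
  then show ?case using mul_carr[OF Suc.IH r_carr] by (simp add: mult.commute)
qed (use one_carr in simp)

lemma gpow_add: "G (p + q) = mul R (2 ^ p) (2 ^ q) (G p) (G q)"
proof (induction q)
  case 0 then show ?case using mul_one_right[OF gpow_carr] by simp
next
  case (Suc q)
  have "G (p + Suc q) = mul R (2 ^ p * 2 ^ q) 2 (mul R (2 ^ p) (2 ^ q) (G p) (G q)) r"
    using Suc.IH by (simp add: power_add)
  also have "\<dots> = mul R (2 ^ p) (2 ^ q * 2) (G p) (mul R (2 ^ q) 2 (G q) r)"
    by (rule mul_assoc[OF gpow_carr gpow_carr r_carr])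
  finally show ?case by (simp add: mult.commute)
qed

(* Truncating r^(n+1) to the lower half gives r^n, by the unit condition on r. *)
lemma R_truncate: "act R (2 ^ Suc n) (2 ^ n) (lift_map n id) (G (Suc n)) = G n"
proof -
  have pid: "pmap (2 ^ n) (2 ^ n) id" and pp: "pmap 2 1 (pmap_p 2 2)"
    by (simp_all add: pmap_def pmap_p_def)
  have "G n = mul R (2 ^ n) 1 (act R (2 ^ n) (2 ^ n) id (G n)) (act R 2 1 (pmap_p 2 2) r)"
    using act_id[OF gpow_carr] r_unit mul_one_right[OF gpow_carr] by simp
  also have "\<dots> = act R (2 ^ Suc n) (2 ^ n) (smash_map (2 ^ n) (2 ^ n) id (pmap_p 2 2)) (G (Suc n))"
    using mul_act[OF pid pp gpow_carr r_carr] by (simp add: mult.commute)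
  also have "\<dots> = act R (2 ^ Suc n) (2 ^ n) (lift_map n id) (G (Suc n))"
    by (rule act_cong[OF _ gpow_carr]) (simp add: lift_map_smash)
  finally show ?thesis ..
qed

lemma R_lift:
  assumes f: "pmap (2 ^ n) k f"
  shows "act R (2 ^ Suc n) k (lift_map n f) (G (Suc n)) = act R (2 ^ n) k f (G n)"
proof -
  have trunc: "pmap (2 ^ Suc n) (2 ^ n) (lift_map n id)" by (auto simp: pmap_def lift_map_def)
  have "act R (2 ^ Suc n) k (lift_map n f) (G (Suc n))
      = act R (2 ^ Suc n) k (f \<circ> lift_map n id) (G (Suc n))"
    by (simp only: lift_map_comp[OF f])
  also have "\<dots> = act R (2 ^ n) k f (act R (2 ^ Suc n) (2 ^ n) (lift_map n id) (G (Suc n)))"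
    by (rule act_comp[OF trunc f gpow_carr, symmetric])
  finally show ?thesis by (simp only: R_truncate)
qed

(* The merging relation: f(r^n) does not change when two positions of opposite sign in the same
   fibre are sent to the basepoint.  Factor f through s_{a,b,1} and apply condition (4). *)
lemma R_merge_ordered:
  assumes n: "1 \<le> n" and f: "pmap (2 ^ n) k f" and ab: "0 < a" "a < b" "b \<le> 2 ^ n"
    and sign: "plus_index a \<noteq> plus_index b" and fab: "f a = f b"
  shows "act R (2 ^ n) k (f(a := 0, b := 0)) (G n) = act R (2 ^ n) k f (G n)"
proof -
  define N where "N = (2::nat) ^ n"
  define h where "h = f \<circ> merge_section a b"
  define q where "q = pmap_d (N - 1) 1 \<circ> pmap_p (N - 1) a \<circ> pmap_p N b"
  note maps = merge_pmaps[OF ab[unfolded N_def[symmetric]] f[unfolded N_def[symmetric]]]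
  have pq: "pmap N (N - 1) q" unfolding q_def using maps(3-5) by (intro pmap_comp)
  have GN: "G n \<in> carr R N" unfolding N_def by (rule gpow_carr)
  have "(2::nat) \<le> 2 ^ n" using n by (cases n) auto
  moreover have "(a \<in> Aplus n \<and> b \<in> Aminus n) \<or> (a \<in> Aminus n \<and> b \<in> Aplus n)"
    using ab sign by (auto simp: Aplus_Aminus)
  ultimately have law_ab: "act R N (N - 1) (pmap_s N a b 1) (G n) = act R N (N - 1) q (G n)"
    using r_merge[OF n, of a b 1] ab act_comp[OF maps(3,4) GN] act_comp[OF pmap_comp[OF maps(3,4)] maps(5) GN]
    unfolding N_def q_def by (simp add: comp_assoc)
  have "act R N k f (G n) = act R N k (h \<circ> pmap_s N a b 1) (G n)"
    using merge_factorisation(1)[OF _ _ f[unfolded N_def[symmetric]] fab] ab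
    by (intro act_cong[OF _ GN]) (simp add: h_def)
  also have "\<dots> = act R (N - 1) k h (act R N (N - 1) (pmap_s N a b 1) (G n))"
    unfolding h_def by (rule act_comp[OF maps(1,2) GN, symmetric])
  also have "\<dots> = act R N k (h \<circ> q) (G n)"
    unfolding law_ab h_def by (rule act_comp[OF pq maps(2) GN])
  also have "\<dots> = act R N k (f(a := 0, b := 0)) (G n)"
    using merge_factorisation(2)[OF _ _ f[unfolded N_def[symmetric]] fab] ab
    by (intro act_cong[OF _ GN]) (simp add: h_def q_def)
  finally show ?thesis unfolding N_def by simp
qed

lemma R_merge:
  assumes n: "1 \<le> n" and f: "pmap (2 ^ n) k f" and ab: "a \<in> {1..2 ^ n}" "b \<in> {1..2 ^ n}"
    and sign: "plus_index a \<noteq> plus_index b" and fab: "f a = f b"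
  shows "act R (2 ^ n) k (f(a := 0, b := 0)) (G n) = act R (2 ^ n) k f (G n)"
proof (cases "a < b")
  case True then show ?thesis using R_merge_ordered[OF n f _ True] ab sign fab by simp
next
  case False
  then have "b < a" using ab sign by (cases "a = b") auto
  then have "act R (2 ^ n) k (f(b := 0, a := 0)) (G n) = act R (2 ^ n) k f (G n)"
    using R_merge_ordered[OF n f, of b a] ab sign fab by simp
  then show ?thesis by (metis fun_upd_twist \<open>b < a\<close> less_irrefl)
qed

(* Sign-preserving permutations do not change f(r^n), by condition (3). *)
lemma R_perm:
  assumes n: "1 \<le> n" and g: "pmap (2 ^ n) k g"
    and \<pi>: "bij_betw \<pi> {1..2 ^ n} {1..2 ^ n}"
    and keeps: "\<forall>x\<in>{1..2 ^ n}. plus_index (\<pi> x) = plus_index x \<and> g (\<pi> x) = f x"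
    and f0: "f 0 = 0"
  shows "act R (2 ^ n) k f (G n) = act R (2 ^ n) k g (G n)"
proof -
  define \<rho> where "\<rho> = \<pi>(0 := 0)"
  have \<rho>: "bij_betw \<rho> {1..2 ^ n} {1..2 ^ n}"
    using \<pi> by (rule bij_betw_cong[THEN iffD1, rotated]) (simp add: \<rho>_def)
  have classes: "\<rho> ` {x\<in>{1..2 ^ n}. plus_index x = s} = {x\<in>{1..2 ^ n}. plus_index x = s}" for s
  proof -
    have "\<rho> ` {x\<in>{1..2 ^ n}. plus_index x = s} = {y\<in>\<rho> ` {1..2 ^ n}. plus_index y = s}"
      using keeps by (auto simp: \<rho>_def)
    then show ?thesis using \<rho> by (simp add: bij_betw_def)
  qed
  have special: "special_perm n \<rho>"
    using \<rho> classes[of True] classes[of False] unfolding special_perm_def Aplus_Aminus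
    by (simp add: \<rho>_def)
  have p\<rho>: "pmap (2 ^ n) (2 ^ n) \<rho>" using \<rho> unfolding pmap_def bij_betw_def \<rho>_def by force
  have "act R (2 ^ n) k g (G n) = act R (2 ^ n) k g (act R (2 ^ n) (2 ^ n) \<rho> (G n))"
    using r_special[OF n special] by simp
  also have "\<dots> = act R (2 ^ n) k (g \<circ> \<rho>) (G n)" by (rule act_comp[OF p\<rho> g gpow_carr])
  also have "\<dots> = act R (2 ^ n) k f (G n)"
    by (rule act_cong[OF _ gpow_carr]) (use keeps g f0 in \<open>auto simp: \<rho>_def pmap_def\<close>)
  finally show ?thesis ..
qed

lemma coherent_reduction:
  assumes n: "1 \<le> n" and f: "pmap (2 ^ n) k f"
  shows "\<exists>f'. pmap (2 ^ n) k f' \<and> sign_coherent (2 ^ n) f'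
           \<and> act HZ (2 ^ n) k f' (pm1 n) = act HZ (2 ^ n) k f (pm1 n)
           \<and> act R (2 ^ n) k f' (G n) = act R (2 ^ n) k f (G n)"
  using f
proof (induction "card {x\<in>{1..2 ^ n}. f x \<noteq> 0}" arbitrary: f rule: less_induct)
  case less
  show ?case
  proof (cases "sign_coherent (2 ^ n) f")
    case True then show ?thesis using less.prems by blast
  next
    case False
    then obtain a b where ab: "a \<in> {1..2 ^ n}" "b \<in> {1..2 ^ n}" "f a = f b" "f a \<noteq> 0"
      "plus_index a \<noteq> plus_index b"
      unfolding sign_coherent_def by blast
    let ?f' = "f(a := 0, b := 0)"
    have "pmap (2 ^ n) k ?f'" using less.prems by (auto simp: pmap_def)
    moreover have "card {x\<in>{1..2 ^ n}. ?f' x \<noteq> 0} < card {x\<in>{1..2 ^ n}. f x \<noteq> 0}"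
      by (rule psubset_card_mono) (use ab in auto)
    ultimately obtain f'' where "pmap (2 ^ n) k f''" "sign_coherent (2 ^ n) f''"
      "act HZ (2 ^ n) k f'' (pm1 n) = act HZ (2 ^ n) k ?f' (pm1 n)"
      "act R (2 ^ n) k f'' (G n) = act R (2 ^ n) k ?f' (G n)"
      using less.hyps by blast
    moreover have "act HZ (2 ^ n) k ?f' (pm1 n) = act HZ (2 ^ n) k f (pm1 n)"
      using HZ_merge[OF ab(1,2,5,3)] .
    moreover have "act R (2 ^ n) k ?f' (G n) = act R (2 ^ n) k f (G n)"
      using R_merge[OF n less.prems ab(1,2,5,3)] .
    ultimately show ?thesis by metis
  qed
qed

lemma act_well_defined_level:
  assumes n: "1 \<le> n" and f: "pmap (2 ^ n) k f" and g: "pmap (2 ^ n) k g"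
    and same: "act HZ (2 ^ n) k f (pm1 n) = act HZ (2 ^ n) k g (pm1 n)"
  shows "act R (2 ^ n) k f (G n) = act R (2 ^ n) k g (G n)"
proof -
  obtain f' where f': "pmap (2 ^ n) k f'" "sign_coherent (2 ^ n) f'"
      "act HZ (2 ^ n) k f' (pm1 n) = act HZ (2 ^ n) k f (pm1 n)"
      "act R (2 ^ n) k f' (G n) = act R (2 ^ n) k f (G n)"
    using coherent_reduction[OF n f] by blast
  obtain g' where g': "pmap (2 ^ n) k g'" "sign_coherent (2 ^ n) g'"
      "act HZ (2 ^ n) k g' (pm1 n) = act HZ (2 ^ n) k g (pm1 n)"
      "act R (2 ^ n) k g' (G n) = act R (2 ^ n) k g (G n)"
    using coherent_reduction[OF n g] by blast
  obtain \<pi> where "bij_betw \<pi> {1..2 ^ n} {1..2 ^ n}"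
      "\<forall>x\<in>{1..2 ^ n}. plus_index (\<pi> x) = plus_index x \<and> g' (\<pi> x) = f' x"
    using coherent_perm[OF f'(1,2) g'(1,2)] f'(3) g'(3) same by auto
  then have "act R (2 ^ n) k f' (G n) = act R (2 ^ n) k g' (G n)"
    using R_perm[OF n g'(1)] f'(1) by (simp add: pmap_def)
  then show ?thesis using f'(4) g'(4) by simp
qed

lemma lift_iterate:
  assumes f: "pmap (2 ^ n) k f"
  shows "\<exists>f'. pmap (2 ^ (n + d)) k f' \<and> act HZ (2 ^ (n + d)) k f' (pm1 (n + d)) = act HZ (2 ^ n) k f (pm1 n)
           \<and> act R (2 ^ (n + d)) k f' (G (n + d)) = act R (2 ^ n) k f (G n)"
proof (induction d)
  case 0 then show ?case using f by auto
next
  case (Suc d)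
  then obtain f' where "pmap (2 ^ (n + d)) k f'"
      "act HZ (2 ^ (n + d)) k f' (pm1 (n + d)) = act HZ (2 ^ n) k f (pm1 n)"
      "act R (2 ^ (n + d)) k f' (G (n + d)) = act R (2 ^ n) k f (G n)" by blast
  then show ?case using pmap_lift HZ_lift R_lift by (metis add_Suc_right)
qed

(* Well-definedness: presentations of the same vector at different levels give the same element
   of R, after lifting both to a common level. *)
lemma act_well_defined:
  assumes f: "pmap (2 ^ n) k f" and g: "pmap (2 ^ m) k g"
    and same: "act HZ (2 ^ n) k f (pm1 n) = act HZ (2 ^ m) k g (pm1 m)"
  shows "act R (2 ^ n) k f (G n) = act R (2 ^ m) k g (G m)"
proof -
  obtain f' where f': "pmap (2 ^ (n + (m + 1))) k f'"
      "act HZ (2 ^ (n + (m + 1))) k f' (pm1 (n + (m + 1))) = act HZ (2 ^ n) k f (pm1 n)"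
      "act R (2 ^ (n + (m + 1))) k f' (G (n + (m + 1))) = act R (2 ^ n) k f (G n)"
    using lift_iterate[OF f] by blast
  obtain g' where g': "pmap (2 ^ (m + (n + 1))) k g'"
      "act HZ (2 ^ (m + (n + 1))) k g' (pm1 (m + (n + 1))) = act HZ (2 ^ m) k g (pm1 m)"
      "act R (2 ^ (m + (n + 1))) k g' (G (m + (n + 1))) = act R (2 ^ m) k g (G m)"
    using lift_iterate[OF g] by blast
  have level: "m + (n + 1) = n + (m + 1)" by simp
  show ?thesis
    using act_well_defined_level[of "n + (m + 1)" k f' g'] f' g'[unfolded level] same by simp
qed

abbreviation \<phi> :: "nat \<Rightarrow> (nat \<Rightarrow> int) \<Rightarrow> 'a" where "\<phi> \<equiv> induced_map R r"

lemma induced_map_eq: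
  assumes f: "pmap (2 ^ n) k f" and v: "act HZ (2 ^ n) k f (pm1 n) = v"
  shows "\<phi> k v = act R (2 ^ n) k f (G n)"
proof -
  let ?P = "\<lambda>(n, f). pmap (2 ^ n) k f \<and> act HZ (2 ^ n) k f (pm1 n) = v"
  obtain n' f' where choice: "(SOME p. ?P p) = (n', f')" by (cases "SOME p. ?P p")
  have "?P (SOME p. ?P p)" using f v by (intro someI[of ?P "(n, f)"]) simp
  then have "pmap (2 ^ n') k f'" "act HZ (2 ^ n') k f' (pm1 n') = v" by (simp_all add: choice)
  then show ?thesis
    using act_well_defined[OF _ f] v unfolding induced_map_def choice by simp
qed

lemma induced_map_carr: "v \<in> carr HZ k \<Longrightarrow> \<phi> k v \<in> carr R k"
  by (metis presentation induced_map_eq act_carr gpow_carr)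

lemma induced_map_bpt: "\<phi> k (bpt HZ k) = bpt R k"
proof -
  have zero: "pmap (2 ^ 0) k (\<lambda>x. 0)" "pmap 1 0 (\<lambda>x. 0)" "pmap 0 k (\<lambda>x. 0)"
    by (simp_all add: pmap_def)
  have "act HZ (2 ^ 0) k (\<lambda>x. 0) (pm1 0) = bpt HZ k" by (auto simp: HZ_simps)
  then have "\<phi> k (bpt HZ k) = act R 1 k (\<lambda>x. 0) (one R)" using induced_map_eq[OF zero(1)] by simp
  also have "\<dots> = act R 0 k (\<lambda>x. 0) (act R 1 0 (\<lambda>x. 0) (one R))"
    using act_comp[OF zero(2,3) one_carr] by (simp add: comp_def)
  also have "act R 1 0 (\<lambda>x. 0) (one R) = bpt R 0" using act_carr[OF zero(2) one_carr] carr0 by simp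
  finally show ?thesis using act_bpt[OF zero(3)] by simp
qed

lemma induced_map_natural:
  assumes f: "pmap n m f" and v: "v \<in> carr HZ n"
  shows "\<phi> m (act HZ n m f v) = act R n m f (\<phi> n v)"
proof -
  obtain p g where g: "pmap (2 ^ p) n g" "act HZ (2 ^ p) n g (pm1 p) = v" using presentation[OF v] .
  have "act HZ n m f v = act HZ (2 ^ p) m (f \<circ> g) (pm1 p)"
    unfolding g(2)[symmetric] by (rule HZ_act_comp[OF g(1) f])
  then have "\<phi> m (act HZ n m f v) = act R (2 ^ p) m (f \<circ> g) (G p)"
    using induced_map_eq[OF pmap_comp[OF g(1) f]] by simp
  also have "\<dots> = act R n m f (act R (2 ^ p) n g (G p))" by (rule act_comp[OF g(1) f gpow_carr, symmetric])
  finally show ?thesis using induced_map_eq[OF g] by simp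
qed

lemma induced_map_one: "\<phi> 1 (one HZ) = one R"
proof -
  have p: "pmap (2 ^ 1) 1 (pmap_p 2 2)" by (simp add: pmap_def pmap_p_def)
  have "act HZ (2 ^ 1) 1 (pmap_p 2 2) (pm1 1) = one HZ"
  proof
    fix j
    have "{i. 1 \<le> i \<and> i \<le> 2 \<and> pmap_p 2 2 i = 1} = {1}" by (auto simp: pmap_p_def)
    then show "act HZ (2 ^ 1) 1 (pmap_p 2 2) (pm1 1) j = one HZ j"
      by (cases "j = 1") (auto simp: HZ_simps pm1_val plus_index_def)
  qed
  then have "\<phi> 1 (one HZ) = act R 2 1 (pmap_p 2 2) (G 1)" using induced_map_eq[OF p] by simp
  also have "G 1 = r" using mul_one_left[OF r_carr] by simp
  finally show ?thesis using r_unit by simp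
qed

lemma induced_map_mul:
  assumes v: "v \<in> carr HZ n" and w: "w \<in> carr HZ m"
  shows "\<phi> (n * m) (mul HZ n m v w) = mul R n m (\<phi> n v) (\<phi> m w)"
proof -
  obtain p f where f: "pmap (2 ^ p) n f" "act HZ (2 ^ p) n f (pm1 p) = v" using presentation[OF v] .
  obtain q g where g: "pmap (2 ^ q) m g" "act HZ (2 ^ q) m g (pm1 q) = w" using presentation[OF w] .
  have fg: "pmap (2 ^ (p + q)) (n * m) (smash_map (2 ^ p) n f g)"
    using pmap_smash[OF f(1) g(1)] by (simp add: power_add)
  have "mul HZ n m v w = act HZ (2 ^ (p + q)) (n * m) (smash_map (2 ^ p) n f g) (pm1 (p + q))"
    using HZ_smash[OF f(1) g(1), of "pm1 p" "pm1 q"] f(2) g(2) by (simp add: mul_pm1 power_add)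
  then have "\<phi> (n * m) (mul HZ n m v w) = act R (2 ^ (p + q)) (n * m) (smash_map (2 ^ p) n f g) (G (p + q))"
    using induced_map_eq[OF fg] by simp
  also have "\<dots> = mul R n m (act R (2 ^ p) n f (G p)) (act R (2 ^ q) m g (G q))"
    using mul_act[OF f(1) g(1) gpow_carr gpow_carr] by (simp add: gpow_add power_add)
  finally show ?thesis using induced_map_eq[OF f] induced_map_eq[OF g] by simp
qed

lemma induced_map_multiplicative: "multiplicative_map HZ R \<phi>"
  unfolding multiplicative_map_def
  using induced_map_carr induced_map_bpt induced_map_natural induced_map_one induced_map_mul
  by blast

lemma induced_map_pm1: "\<phi> (2 ^ n) (pm1 n) = G n"
proof -
  have "pmap (2 ^ n) (2 ^ n) id" by (simp add: pmap_def)
  then show ?thesis using induced_map_eq[of n "2 ^ n" id "pm1 n"] HZ_act_id[OF pm1_carr] act_id[OF gpow_carr]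
    by simp
qed

lemma induced_map_unique:
  assumes psi: "multiplicative_map HZ R \<psi>" "\<forall>n. \<psi> (2 ^ n) (pm1 n) = G n" and v: "v \<in> carr HZ k"
  shows "\<psi> k v = \<phi> k v"
proof -
  obtain p f where f: "pmap (2 ^ p) k f" "act HZ (2 ^ p) k f (pm1 p) = v" using presentation[OF v] .
  have "\<psi> k (act HZ (2 ^ p) k f (pm1 p)) = act R (2 ^ p) k f (\<psi> (2 ^ p) (pm1 p))"
    using psi(1) f(1) pm1_carr unfolding multiplicative_map_def by blast
  then show ?thesis using psi(2) induced_map_eq[OF f] f(2) by simp
qed

end

theorem theorem3p4:
  fixes R :: "'a gring" and r :: 'a
  assumes "discrete_gamma_ring R"
    and "formal_difference_law R r"
  shows "\<exists>phi. multiplicative_map HZ R phi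
            \<and> (\<forall>n. phi (2 ^ n) (pm1 n) = gpow R r n)
            \<and> (\<forall>k v n f. v \<in> carr HZ k \<longrightarrow> pmap (2 ^ n) k f \<longrightarrow>
                  act HZ (2 ^ n) k f (pm1 n) = v \<longrightarrow> phi k v = act R (2 ^ n) k f (gpow R r n))
            \<and> (\<forall>psi. multiplicative_map HZ R psi \<and> (\<forall>n. psi (2 ^ n) (pm1 n) = gpow R r n) \<longrightarrow>
                  (\<forall>k. \<forall>v\<in>carr HZ k. psi k v = phi k v))"
proof -
  interpret difference_law R r using assms by (rule difference_law.intro)
  show ?thesis
    using induced_map_multiplicative induced_map_pm1 induced_map_eq induced_map_unique
    by (intro exI[of _ "induced_map R r"]) blast
qed

end
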